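(* Let $\pi:P\to M$ be a principal fibre bundle with group $G=P^{-1}P$, in the setting described in the context, and let $\nabla$ be a connection in the groupoid $PP^{-1}$ with connection form $\omega$. Let $R=R_\nabla$ be its curvature and $\hat R$ the $G$-valued 2-form on $P$ corresponding to $R$. Then $\hat R=d\omega$ as $G$-valued 2-forms on $P$, i.e. for every infinitesimal 2-simplex $(x,y,z)$ in $P$, $$R(\pi x,\pi y,\pi z)\cdot x = x\cdot\omega(x,y)\omega(y,z)\omega(z,x).$$ In particular, $d\omega$ is horizontal and equivariant.
   Context: Setting: $\Phi$ is a groupoid whose object set contains a set $M$ and an object $*\notin M$; $P$ is the set of arrows of $\Phi$ with domain $*$ and codomain in $M$; $\pi:P\to M$ the codomain map; $G=P^{-1}P:=\Phi( *,* )$ acts on $P$ from the right by precomposition, freely and transitively on fibres; $x^{-1}z\in G$ for $x,z$ in one fibre is computed in $\Phi$. $PP^{-1}$ is the full subgroupoid of $\Phi$ on $M$, acting on $P$ from the left by postcomposition; composition is right to left. $M$ and $P$ carry reflexive symmetric neighbour relations $\sim$; an infinitesimal $k$-simplex is a $(k+1)$-tuple of mutual neighbours; $\pi$ preserves $\sim$; every infinitesimal $k$-simplex in $M$ lifts to one in $P$ starting at any prescribed point over its first vertex; the right action of each $g\in G$ preserves $\sim$. A connection in $PP^{-1}$ assigns to each $a\sim b$ in $M$ an arrow $\nabla(a,b):b\to a$ of $PP^{-1}$, with $\nabla(a,a)=\mathrm{id}$, $\nabla(b,a)=\nabla(a,b)^{-1}$. Its connection form is $\omega(u,v):=u^{-1}(\nabla(\pi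 u,\pi v)\cdot v)\in G$ for $u\sim v$. Its curvature is the 2-form $R(a_0,a_1,a_2)=\nabla(a_0,a_1)\nabla(a_1,a_2)\nabla(a_2,a_0)\in PP^{-1}(a_0,a_0)$ on infinitesimal 2-simplices of $M$ (a 2-form with values in the gauge group bundle, whose fibre over $a$ is $PP^{-1}(a,a)$). For a gauge-valued 2-form $\alpha$ on $M$, $\hat\alpha$ is the $G$-valued 2-form on $P$ with $\hat\alpha(u_0,u_1,u_2)=u_0^{-1}(\alpha(\pi u_0,\pi u_1,\pi u_2)\cdot u_0)$. For a $G$-valued 1-form $\omega$, $d\omega(x_0,x_1,x_2)=\omega(x_0,x_1)\omega(x_1,x_2)\omega(x_2,x_0)$. A $G$-valued $k$-form $\theta$ on $P$ is horizontal if $\theta(u_0,u_1,\dots,u_k)=\theta(u_0,u_1g_1,\dots,u_kg_k)$ whenever $(u_0,u_1g_1,\dots,u_kg_k)$ is still an infinitesimal simplex, and equivariant if $\theta(u_0g,\dots,u_kg)=g^{-1}\theta(u_0,\dots,u_k)g$ for all $g\in G$. *)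

theory Defs
  imports Main
begin

text \<open>A groupoid is given by an object set Ob, an arrow set Ar, domain and codomain maps,
  composition (cmp g f = g after f, defined when dm g = cd f; composition is right to left),
  inverse and identities.\<close>

definition groupoid ::
  "'o set \<Rightarrow> 'a set \<Rightarrow> ('a \<Rightarrow> 'o) \<Rightarrow> ('a \<Rightarrow> 'o) \<Rightarrow> ('a \<Rightarrow> 'a \<Rightarrow> 'a) \<Rightarrow> ('a \<Rightarrow> 'a) \<Rightarrow> ('o \<Rightarrow> 'a) \<Rightarrow> bool"
  where
  "groupoid Ob Ar dm cd cmp iv idt \<longleftrightarrow>
    (\<forall>f\<in>Ar. dm f \<in> Ob \<and> cd f \<in> Ob) \<and>
    (\<forall>a\<in>Ob. idt a \<in> Ar \<and> dm (idt a) = a \<and> cd (idt a) = a) \<and>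
    (\<forall>f\<in>Ar. \<forall>g\<in>Ar. dm g = cd f \<longrightarrow>
        cmp g f \<in> Ar \<and> dm (cmp g f) = dm f \<and> cd (cmp g f) = cd g) \<and>
    (\<forall>f\<in>Ar. \<forall>g\<in>Ar. \<forall>h\<in>Ar. dm h = cd g \<and> dm g = cd f \<longrightarrow>
        cmp h (cmp g f) = cmp (cmp h g) f) \<and>
    (\<forall>f\<in>Ar. cmp (idt (cd f)) f = f \<and> cmp f (idt (dm f)) = f) \<and>
    (\<forall>f\<in>Ar. iv f \<in> Ar \<and> dm (iv f) = cd f \<and> cd (iv f) = dm f \<and>
        cmp (iv f) f = idt (dm f) \<and> cmp f (iv f) = idt (cd f))"

definition bundleP :: "'a set \<Rightarrow> ('a \<Rightarrow> 'o) \<Rightarrow> ('a \<Rightarrow> 'o) \<Rightarrow> 'o \<Rightarrow> 'o set \<Rightarrow> 'a set" where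
  "bundleP Ar dm cd st M = {f\<in>Ar. dm f = st \<and> cd f \<in> M}"

definition groupG :: "'a set \<Rightarrow> ('a \<Rightarrow> 'o) \<Rightarrow> ('a \<Rightarrow> 'o) \<Rightarrow> 'o \<Rightarrow> 'a set" where
  "groupG Ar dm cd st = {f\<in>Ar. dm f = st \<and> cd f = st}"

definition inf_simplex :: "('b \<Rightarrow> 'b \<Rightarrow> bool) \<Rightarrow> 'b list \<Rightarrow> bool" where
  "inf_simplex nb xs \<longleftrightarrow> (\<forall>x\<in>set xs. \<forall>y\<in>set xs. nb x y)"

definition bundle_setting ::
  "'o set \<Rightarrow> 'a set \<Rightarrow> ('a \<Rightarrow> 'o) \<Rightarrow> ('a \<Rightarrow> 'o) \<Rightarrow> ('a \<Rightarrow> 'a \<Rightarrow> 'a) \<Rightarrow> ('a \<Rightarrow> 'a) \<Rightarrow> ('o \<Rightarrow> 'a)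
   \<Rightarrow> 'o \<Rightarrow> 'o set \<Rightarrow> ('o \<Rightarrow> 'o \<Rightarrow> bool) \<Rightarrow> ('a \<Rightarrow> 'a \<Rightarrow> bool) \<Rightarrow> bool" where
  "bundle_setting Ob Ar dm cd cmp iv idt st M nbM nbP \<longleftrightarrow>
    groupoid Ob Ar dm cd cmp iv idt \<and> M \<subseteq> Ob \<and> st \<in> Ob \<and> st \<notin> M \<and>
    (\<forall>a\<in>M. nbM a a) \<and> (\<forall>a\<in>M. \<forall>b\<in>M. nbM a b \<longrightarrow> nbM b a) \<and>
    (\<forall>u\<in>bundleP Ar dm cd st M. nbP u u) \<and>
    (\<forall>u\<in>bundleP Ar dm cd st M. \<forall>v\<in>bundleP Ar dm cd st M. nbP u v \<longrightarrow> nbP v u) \<and>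
    (\<forall>u\<in>bundleP Ar dm cd st M. \<forall>v\<in>bundleP Ar dm cd st M. nbP u v \<longrightarrow> nbM (cd u) (cd v)) \<and>
    (\<forall>as u. as \<noteq> [] \<and> set as \<subseteq> M \<and> inf_simplex nbM as \<and>
        u \<in> bundleP Ar dm cd st M \<and> cd u = hd as \<longrightarrow>
       (\<exists>us. length us = length as \<and> set us \<subseteq> bundleP Ar dm cd st M \<and>
            inf_simplex nbP us \<and> hd us = u \<and> map cd us = as)) \<and>
    (\<forall>g\<in>groupG Ar dm cd st. \<forall>u\<in>bundleP Ar dm cd st M. \<forall>v\<in>bundleP Ar dm cd st M.
        nbP u v \<longrightarrow> nbP (cmp u g) (cmp v g))"

definition connection ::
  "'a set \<Rightarrow> ('a \<Rightarrow> 'o) \<Rightarrow> ('a \<Rightarrow> 'o) \<Rightarrow> ('a \<Rightarrow> 'a) \<Rightarrow> ('o \<Rightarrow> 'a)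
   \<Rightarrow> 'o set \<Rightarrow> ('o \<Rightarrow> 'o \<Rightarrow> bool) \<Rightarrow> ('o \<Rightarrow> 'o \<Rightarrow> 'a) \<Rightarrow> bool" where
  "connection Ar dm cd iv idt M nbM nabla \<longleftrightarrow>
    (\<forall>a\<in>M. \<forall>b\<in>M. nbM a b \<longrightarrow>
       nabla a b \<in> Ar \<and> dm (nabla a b) = b \<and> cd (nabla a b) = a \<and>
       nabla b a = iv (nabla a b)) \<and>
    (\<forall>a\<in>M. nabla a a = idt a)"

definition conn_form ::
  "('a \<Rightarrow> 'o) \<Rightarrow> ('a \<Rightarrow> 'a \<Rightarrow> 'a) \<Rightarrow> ('a \<Rightarrow> 'a) \<Rightarrow> ('o \<Rightarrow> 'o \<Rightarrow> 'a) \<Rightarrow> 'a \<Rightarrow> 'a \<Rightarrow> 'a" where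
  "conn_form cd cmp iv nabla u v = cmp (iv u) (cmp (nabla (cd u) (cd v)) v)"

definition curvature :: "('a \<Rightarrow> 'a \<Rightarrow> 'a) \<Rightarrow> ('o \<Rightarrow> 'o \<Rightarrow> 'a) \<Rightarrow> 'o \<Rightarrow> 'o \<Rightarrow> 'o \<Rightarrow> 'a" where
  "curvature cmp nabla a0 a1 a2 = cmp (nabla a0 a1) (cmp (nabla a1 a2) (nabla a2 a0))"

definition hat_form ::
  "('a \<Rightarrow> 'o) \<Rightarrow> ('a \<Rightarrow> 'a \<Rightarrow> 'a) \<Rightarrow> ('a \<Rightarrow> 'a) \<Rightarrow> ('o \<Rightarrow> 'o \<Rightarrow> 'o \<Rightarrow> 'a) \<Rightarrow> 'a \<Rightarrow> 'a \<Rightarrow> 'a \<Rightarrow> 'a" where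
  "hat_form cd cmp iv \<alpha> u0 u1 u2 = cmp (iv u0) (cmp (\<alpha> (cd u0) (cd u1) (cd u2)) u0)"

definition d_form :: "('a \<Rightarrow> 'a \<Rightarrow> 'a) \<Rightarrow> ('a \<Rightarrow> 'a \<Rightarrow> 'a) \<Rightarrow> 'a \<Rightarrow> 'a \<Rightarrow> 'a \<Rightarrow> 'a" where
  "d_form cmp \<omega> x0 x1 x2 = cmp (\<omega> x0 x1) (cmp (\<omega> x1 x2) (\<omega> x2 x0))"

definition horizontal2 ::
  "'a set \<Rightarrow> 'a set \<Rightarrow> ('a \<Rightarrow> 'a \<Rightarrow> 'a) \<Rightarrow> ('a \<Rightarrow> 'a \<Rightarrow> bool) \<Rightarrow> ('a \<Rightarrow> 'a \<Rightarrow> 'a \<Rightarrow> 'a) \<Rightarrow> bool" where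
  "horizontal2 P G cmp nbP \<theta> \<longleftrightarrow>
    (\<forall>u0\<in>P. \<forall>u1\<in>P. \<forall>u2\<in>P. \<forall>g1\<in>G. \<forall>g2\<in>G.
       inf_simplex nbP [u0, u1, u2] \<and> inf_simplex nbP [u0, cmp u1 g1, cmp u2 g2] \<longrightarrow>
       \<theta> u0 u1 u2 = \<theta> u0 (cmp u1 g1) (cmp u2 g2))"

definition equivariant2 ::
  "'a set \<Rightarrow> 'a set \<Rightarrow> ('a \<Rightarrow> 'a \<Rightarrow> 'a) \<Rightarrow> ('a \<Rightarrow> 'a) \<Rightarrow> ('a \<Rightarrow> 'a \<Rightarrow> bool) \<Rightarrow> ('a \<Rightarrow> 'a \<Rightarrow> 'a \<Rightarrow> 'a) \<Rightarrow> bool" where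
  "equivariant2 P G cmp iv nbP \<theta> \<longleftrightarrow>
    (\<forall>u0\<in>P. \<forall>u1\<in>P. \<forall>u2\<in>P. \<forall>g\<in>G.
       inf_simplex nbP [u0, u1, u2] \<longrightarrow>
       \<theta> (cmp u0 g) (cmp u1 g) (cmp u2 g) = cmp (iv g) (cmp (\<theta> u0 u1 u2) g))"

end

theory Submission
  imports Defs
begin

text \<open>Unfolding \<open>\<omega>\<close>, the product \<open>\<omega>(x,y) \<omega>(y,z) \<omega>(z,x)\<close> is
  \<open>x\<inverse> \<nabla>(\<pi>x,\<pi>y) y y\<inverse> \<nabla>(\<pi>y,\<pi>z) z z\<inverse> \<nabla>(\<pi>z,\<pi>x) x\<close>; the inner factors
  \<open>y y\<inverse>\<close> and \<open>z z\<inverse>\<close> cancel, leaving \<open>x\<inverse> R(\<pi>x,\<pi>y,\<pi>z) x\<close>, which is the value of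
  the form on \<open>P\<close> induced by \<open>R\<close>. Such an induced form is horizontal, since it sees the last
  two vertices only through their projections, and equivariant, since
  \<open>(x g)\<inverse> \<alpha> (x g) = g\<inverse> (x\<inverse> \<alpha> x) g\<close>; \<open>d\<omega>\<close> inherits both properties because it agrees
  with it on every infinitesimal 2-simplex.\<close>

locale groupoid_structure =
  fixes Ob :: "'o set" and Ar :: "'a set" and dm cd :: "'a \<Rightarrow> 'o"
    and cmp :: "'a \<Rightarrow> 'a \<Rightarrow> 'a" and iv :: "'a \<Rightarrow> 'a" and idt :: "'o \<Rightarrow> 'a"
  assumes groupoid: "groupoid Ob Ar dm cd cmp iv idt"
begin

lemma cmp_closed [simp]: "f \<in> Ar \<Longrightarrow> g \<in> Ar \<Longrightarrow> dm g = cd f \<Longrightarrow> cmp g f \<in> Ar"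
  and dm_cmp [simp]: "f \<in> Ar \<Longrightarrow> g \<in> Ar \<Longrightarrow> dm g = cd f \<Longrightarrow> dm (cmp g f) = dm f"
  and cd_cmp [simp]: "f \<in> Ar \<Longrightarrow> g \<in> Ar \<Longrightarrow> dm g = cd f \<Longrightarrow> cd (cmp g f) = cd g"
  using groupoid unfolding groupoid_def by blast+

lemma cmp_assoc [simp]:
  "f \<in> Ar \<Longrightarrow> g \<in> Ar \<Longrightarrow> h \<in> Ar \<Longrightarrow> dm h = cd g \<Longrightarrow> dm g = cd f \<Longrightarrow>
    cmp h (cmp g f) = cmp (cmp h g) f"
  using groupoid unfolding groupoid_def by blast

lemma iv_closed [simp]: "f \<in> Ar \<Longrightarrow> iv f \<in> Ar"
  and dm_iv [simp]: "f \<in> Ar \<Longrightarrow> dm (iv f) = cd f"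
  and cd_iv [simp]: "f \<in> Ar \<Longrightarrow> cd (iv f) = dm f"
  and cmp_iv_left [simp]: "f \<in> Ar \<Longrightarrow> cmp (iv f) f = idt (dm f)"
  and cmp_iv_right [simp]: "f \<in> Ar \<Longrightarrow> cmp f (iv f) = idt (cd f)"
  and cmp_idt_left [simp]: "f \<in> Ar \<Longrightarrow> a = cd f \<Longrightarrow> cmp (idt a) f = f"
  and cmp_idt_right [simp]: "f \<in> Ar \<Longrightarrow> a = dm f \<Longrightarrow> cmp f (idt a) = f"
  using groupoid unfolding groupoid_def by blast+

lemma cmp_cmp_iv_cancel [simp]:
  "f \<in> Ar \<Longrightarrow> g \<in> Ar \<Longrightarrow> dm f = cd g \<Longrightarrow> cmp (cmp f g) (iv g) = f"
  by (metis cmp_assoc iv_closed cd_iv cmp_iv_right cmp_idt_right dm_iv)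

lemma cmp_iv_cmp_cancel [simp]:
  "f \<in> Ar \<Longrightarrow> g \<in> Ar \<Longrightarrow> dm f = dm g \<Longrightarrow> cmp (cmp f (iv g)) g = f"
  by (metis cmp_assoc iv_closed cd_iv cmp_iv_left cmp_idt_right dm_iv)

lemma iv_cmp:
  assumes "f \<in> Ar" "g \<in> Ar" "dm g = cd f"
  shows "iv (cmp g f) = cmp (iv f) (iv g)"
proof -
  let ?h = "cmp g f" and ?k = "cmp (iv f) (iv g)"
  have "cmp ?k ?h = idt (dm ?h)"
    using assms by simp
  then have "iv ?h = cmp (cmp ?k ?h) (iv ?h)"
    using assms by simp
  also have "\<dots> = ?k"
    using assms by (simp del: cmp_assoc)
  finally show ?thesis .
qed

end

locale principal_bundle =
  fixes Ob :: "'o set" and Ar :: "'a set" and dm cd :: "'a \<Rightarrow> 'o"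
    and cmp :: "'a \<Rightarrow> 'a \<Rightarrow> 'a" and iv :: "'a \<Rightarrow> 'a" and idt :: "'o \<Rightarrow> 'a"
    and st :: 'o and M :: "'o set"
    and nbM :: "'o \<Rightarrow> 'o \<Rightarrow> bool" and nbP :: "'a \<Rightarrow> 'a \<Rightarrow> bool"
  assumes bundle_setting: "bundle_setting Ob Ar dm cd cmp iv idt st M nbM nbP"
begin

sublocale groupoid_structure Ob Ar dm cd cmp iv idt
  using bundle_setting unfolding bundle_setting_def by unfold_locales blast

abbreviation P where "P \<equiv> bundleP Ar dm cd st M"
abbreviation G where "G \<equiv> groupG Ar dm cd st"

lemma bundleP_iff: "u \<in> P \<longleftrightarrow> u \<in> Ar \<and> dm u = st \<and> cd u \<in> M"
  unfolding bundleP_def by simp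

lemma groupG_iff: "g \<in> G \<longleftrightarrow> g \<in> Ar \<and> dm g = st \<and> cd g = st"
  unfolding groupG_def by simp

lemma right_action_closed: "u \<in> P \<Longrightarrow> g \<in> G \<Longrightarrow> cmp u g \<in> P"
  and cd_right_action [simp]: "u \<in> P \<Longrightarrow> g \<in> G \<Longrightarrow> cd (cmp u g) = cd u"
  by (simp_all add: bundleP_iff groupG_iff)

lemma inf_simplex_project:
  assumes "set us \<subseteq> P" "inf_simplex nbP us"
  shows "inf_simplex nbM (map cd us)"
proof -
  have "nbP u v \<Longrightarrow> u \<in> P \<Longrightarrow> v \<in> P \<Longrightarrow> nbM (cd u) (cd v)" for u v
    using bundle_setting unfolding bundle_setting_def by blast
  with assms show ?thesis
    unfolding inf_simplex_def by (simp add: subset_iff)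
qed

lemma inf_simplex_right_action:
  assumes "set us \<subseteq> P" "inf_simplex nbP us" "g \<in> G"
  shows "inf_simplex nbP (map (\<lambda>u. cmp u g) us)"
proof -
  have "nbP u v \<Longrightarrow> u \<in> P \<Longrightarrow> v \<in> P \<Longrightarrow> nbP (cmp u g) (cmp v g)" for u v
    using bundle_setting \<open>g \<in> G\<close> unfolding bundle_setting_def by blast
  with assms show ?thesis
    unfolding inf_simplex_def by (simp add: subset_iff)
qed

definition gauge_form2 :: "('o \<Rightarrow> 'o \<Rightarrow> 'o \<Rightarrow> 'a) \<Rightarrow> bool" where
  "gauge_form2 \<alpha> \<longleftrightarrow> (\<forall>a\<in>M. \<forall>b\<in>M. \<forall>c\<in>M. inf_simplex nbM [a, b, c] \<longrightarrow>
     \<alpha> a b c \<in> Ar \<and> dm (\<alpha> a b c) = a \<and> cd (\<alpha> a b c) = a)"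

lemma gauge_form2_values:
  assumes "gauge_form2 \<alpha>" "x \<in> P" "y \<in> P" "z \<in> P" "inf_simplex nbP [x, y, z]"
  shows "\<alpha> (cd x) (cd y) (cd z) \<in> Ar" "dm (\<alpha> (cd x) (cd y) (cd z)) = cd x"
    "cd (\<alpha> (cd x) (cd y) (cd z)) = cd x"
  using assms inf_simplex_project[of "[x, y, z]"]
  unfolding gauge_form2_def by (auto simp: bundleP_iff)

lemma cmp_hat_form:
  assumes "gauge_form2 \<alpha>" "x \<in> P" "y \<in> P" "z \<in> P" "inf_simplex nbP [x, y, z]"
  shows "cmp x (hat_form cd cmp iv \<alpha> x y z) = cmp (\<alpha> (cd x) (cd y) (cd z)) x"
  using gauge_form2_values[OF assms] \<open>x \<in> P\<close>
  unfolding hat_form_def by (simp add: bundleP_iff)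

lemma hat_form_horizontal:
  "horizontal2 P G cmp nbP (hat_form cd cmp iv \<alpha>)"
  unfolding horizontal2_def hat_form_def by simp

lemma hat_form_equivariant:
  assumes "gauge_form2 \<alpha>"
  shows "equivariant2 P G cmp iv nbP (hat_form cd cmp iv \<alpha>)"
  unfolding equivariant2_def
proof (intro ballI impI)
  fix x y z g
  assume "x \<in> P" "y \<in> P" "z \<in> P" "g \<in> G" "inf_simplex nbP [x, y, z]"
  with gauge_form2_values[OF assms] show "hat_form cd cmp iv \<alpha> (cmp x g) (cmp y g) (cmp z g)
      = cmp (iv g) (cmp (hat_form cd cmp iv \<alpha> x y z) g)"
    unfolding hat_form_def by (simp add: bundleP_iff groupG_iff iv_cmp)
qed

lemma horizontal2_cong:
  assumes "\<And>x y z. x \<in> P \<Longrightarrow> y \<in> P \<Longrightarrow> z \<in> P \<Longrightarrow> inf_simplex nbP [x, y, z] \<Longrightarrow>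
      \<theta> x y z = \<theta>' x y z"
    and "horizontal2 P G cmp nbP \<theta>'"
  shows "horizontal2 P G cmp nbP \<theta>"
  using assms right_action_closed unfolding horizontal2_def by metis

lemma equivariant2_cong:
  assumes "\<And>x y z. x \<in> P \<Longrightarrow> y \<in> P \<Longrightarrow> z \<in> P \<Longrightarrow> inf_simplex nbP [x, y, z] \<Longrightarrow>
      \<theta> x y z = \<theta>' x y z"
    and "equivariant2 P G cmp iv nbP \<theta>'"
  shows "equivariant2 P G cmp iv nbP \<theta>"
  unfolding equivariant2_def
proof (intro ballI impI)
  fix x y z g
  assume xyz: "x \<in> P" "y \<in> P" "z \<in> P" "g \<in> G" "inf_simplex nbP [x, y, z]"
  then have "inf_simplex nbP [cmp x g, cmp y g, cmp z g]"
    using inf_simplex_right_action[of "[x, y, z]" g] by simp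
  with xyz assms show "\<theta> (cmp x g) (cmp y g) (cmp z g) = cmp (iv g) (cmp (\<theta> x y z) g)"
    using right_action_closed unfolding equivariant2_def by metis
qed

end

locale bundle_connection = principal_bundle +
  fixes nabla
  assumes connection: "connection Ar dm cd iv idt M nbM nabla"
begin

abbreviation \<omega> where "\<omega> \<equiv> conn_form cd cmp iv nabla"
abbreviation R where "R \<equiv> curvature cmp nabla"

lemma nabla_arrow:
  assumes "a \<in> M" "b \<in> M" "nbM a b"
  shows "nabla a b \<in> Ar" "dm (nabla a b) = b" "cd (nabla a b) = a"
  using connection assms unfolding connection_def by blast+

lemma curvature_gauge_form2: "gauge_form2 R"
  unfolding gauge_form2_def curvature_def inf_simplex_def
  by (simp add: nabla_arrow)

lemma d_conn_form_eq_hat_curvature: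
  assumes "x \<in> P" "y \<in> P" "z \<in> P" "inf_simplex nbP [x, y, z]"
  shows "d_form cmp \<omega> x y z = hat_form cd cmp iv R x y z"
proof -
  have "inf_simplex nbM [cd x, cd y, cd z]"
    using inf_simplex_project[of "[x, y, z]"] assms by simp
  then show ?thesis
    using assms unfolding d_form_def conn_form_def curvature_def hat_form_def inf_simplex_def
    by (simp add: bundleP_iff nabla_arrow)
qed

end

theorem theorem1:
  fixes Ob :: "'o set" and Ar :: "'a set" and dm cd :: "'a \<Rightarrow> 'o"
    and cmp :: "'a \<Rightarrow> 'a \<Rightarrow> 'a" and iv :: "'a \<Rightarrow> 'a" and idt :: "'o \<Rightarrow> 'a"
    and st :: 'o and M :: "'o set"
    and nbM :: "'o \<Rightarrow> 'o \<Rightarrow> bool" and nbP :: "'a \<Rightarrow> 'a \<Rightarrow> bool"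
    and nabla :: "'o \<Rightarrow> 'o \<Rightarrow> 'a"
  assumes "bundle_setting Ob Ar dm cd cmp iv idt st M nbM nbP"
    and "connection Ar dm cd iv idt M nbM nabla"
  shows "(\<forall>x\<in>bundleP Ar dm cd st M. \<forall>y\<in>bundleP Ar dm cd st M. \<forall>z\<in>bundleP Ar dm cd st M.
            inf_simplex nbP [x, y, z] \<longrightarrow>
              hat_form cd cmp iv (curvature cmp nabla) x y z
                = d_form cmp (conn_form cd cmp iv nabla) x y z
            \<and> cmp (curvature cmp nabla (cd x) (cd y) (cd z)) x
                = cmp x (cmp (conn_form cd cmp iv nabla x y)
                          (cmp (conn_form cd cmp iv nabla y z) (conn_form cd cmp iv nabla z x))))
       \<and> horizontal2 (bundleP Ar dm cd st M) (groupG Ar dm cd st) cmp nbP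
           (d_form cmp (conn_form cd cmp iv nabla))
       \<and> equivariant2 (bundleP Ar dm cd st M) (groupG Ar dm cd st) cmp iv nbP
           (d_form cmp (conn_form cd cmp iv nabla))"
proof -
  interpret bundle_connection Ob Ar dm cd cmp iv idt st M nbM nbP nabla
    using assms by unfold_locales
  note d_eq_hat = d_conn_form_eq_hat_curvature
  have "cmp (R (cd x) (cd y) (cd z)) x = cmp x (d_form cmp \<omega> x y z)"
    if "x \<in> P" "y \<in> P" "z \<in> P" "inf_simplex nbP [x, y, z]" for x y z
    using cmp_hat_form[OF curvature_gauge_form2 that] d_eq_hat[OF that] by simp
  moreover have "horizontal2 P G cmp nbP (d_form cmp \<omega>)"
    using horizontal2_cong[OF d_eq_hat hat_form_horizontal] .
  moreover have "equivariant2 P G cmp iv nbP (d_form cmp \<omega>)"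
    using equivariant2_cong[OF d_eq_hat hat_form_equivariant[OF curvature_gauge_form2]] .
  ultimately show ?thesis
    using d_eq_hat unfolding d_form_def by simp
qed

end
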